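(* Let $A=(\alpha_{i,j})$ be an $n\times n$ ($n\ge 2$) symmetric exceptional magic matrix with rational entries, and let $s(A)$ be its common row/column sum. Then there exists a tree $(\mathcal R,\gamma)$ on $\{1,\dots,n\}$ such that $$A=s(A)I+\sum_{T\in\mathcal R}\gamma(T)A(T),$$ with $\gamma(T_0)=\inf\{-\alpha_{i,j}:i\neq j\}$.
   Context: A square matrix is magic if all its row sums and column sums are equal (to $s(A)$). It is exceptional if for every triple $(i,j,k)$ of distinct indices, the maximum of $\alpha_{i,j},\alpha_{j,k},\alpha_{k,i}$ is attained at least twice. $T_0=\{1,\dots,n\}$. A "species of tree" is a family $\mathcal R$ of subsets of $T_0$ containing $T_0$, each of cardinality $\ge2$, any two of which are either disjoint or nested. A tree is a pair $(\mathcal R,\gamma)$ with $\mathcal R$ a species of tree and $\gamma:\mathcal R\to\mathbf Q$ with $\gamma(T)>0$ for $T\neq T_0$. For $T$ of cardinality $n(T)\ge2$, $A(T)=(\alpha_{i,j})$ has $\alpha_{i,j}=-1$ if $i\ne j$, $\{i,j\}\subset T$, $\alpha_{i,i}=n(T)-1$ if $i\in T$, $0$ otherwise. $I$ is the identity matrix. *)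

theory Defs
  imports Complex_Main
begin

text \<open>Square matrices of size n are represented as functions nat \<Rightarrow> nat \<Rightarrow> rat,
  with indices ranging over T0 = {1..n}; values outside this range are irrelevant.\<close>

definition magic :: "nat \<Rightarrow> (nat \<Rightarrow> nat \<Rightarrow> rat) \<Rightarrow> rat \<Rightarrow> bool" where
  "magic n A s \<longleftrightarrow>
     (\<forall>i\<in>{1..n}. (\<Sum>j\<in>{1..n}. A i j) = s) \<and> (\<forall>j\<in>{1..n}. (\<Sum>i\<in>{1..n}. A i j) = s)"

definition symmetric_mat :: "nat \<Rightarrow> (nat \<Rightarrow> nat \<Rightarrow> rat) \<Rightarrow> bool" where
  "symmetric_mat n A \<longleftrightarrow> (\<forall>i\<in>{1..n}. \<forall>j\<in>{1..n}. A i j = A j i)"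

definition max_twice :: "rat \<Rightarrow> rat \<Rightarrow> rat \<Rightarrow> bool" where
  "max_twice a b c \<longleftrightarrow> (let m = max (max a b) c in
     (a = m \<and> b = m) \<or> (b = m \<and> c = m) \<or> (c = m \<and> a = m))"

definition exceptional :: "nat \<Rightarrow> (nat \<Rightarrow> nat \<Rightarrow> rat) \<Rightarrow> bool" where
  "exceptional n A \<longleftrightarrow>
     (\<forall>i\<in>{1..n}. \<forall>j\<in>{1..n}. \<forall>k\<in>{1..n}. i \<noteq> j \<and> j \<noteq> k \<and> k \<noteq> i \<longrightarrow>
        max_twice (A i j) (A j k) (A k i))"

definition species_of_tree :: "nat \<Rightarrow> nat set set \<Rightarrow> bool" where
  "species_of_tree n R \<longleftrightarrow>
     {1..n} \<in> R \<and>
     (\<forall>T\<in>R. T \<subseteq> {1..n} \<and> card T \<ge> 2) \<and>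
     (\<forall>T\<in>R. \<forall>U\<in>R. T \<inter> U = {} \<or> T \<subseteq> U \<or> U \<subseteq> T)"

definition is_tree :: "nat \<Rightarrow> nat set set \<Rightarrow> (nat set \<Rightarrow> rat) \<Rightarrow> bool" where
  "is_tree n R \<gamma> \<longleftrightarrow> species_of_tree n R \<and> (\<forall>T\<in>R. T \<noteq> {1..n} \<longrightarrow> \<gamma> T > 0)"

definition AT :: "nat set \<Rightarrow> nat \<Rightarrow> nat \<Rightarrow> rat" where
  "AT T i j = (if i \<noteq> j \<and> i \<in> T \<and> j \<in> T then -1
               else if i = j \<and> i \<in> T then of_nat (card T) - 1 else 0)"

end

theory Submission
  imports Defs
begin

text \<open>Put \<open>d = -A\<close>. Exceptionality says that in every triangle the minimum of \<open>d\<close> is attained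
  twice, so \<open>d\<close> is an ultra-similarity and its clusters \<open>{y. r \<le> d x y}\<close> are pairwise disjoint or
  nested. By induction on the number of off-diagonal values, truncating \<open>d\<close> at its second largest
  value \<open>v\<close> gives a cluster tree of \<open>min d v\<close>, and adding the clusters of the top level \<open>M\<close> with
  weight \<open>M - v\<close> gives one of \<open>d\<close>. Its weights reproduce \<open>A\<close> off the diagonal; the diagonal then
  follows because \<open>A\<close> has row sums \<open>s\<close> and every \<open>A(T)\<close> has row sums \<open>0\<close>.\<close>

definition ultra_similarity_on :: "'a set \<Rightarrow> ('a \<Rightarrow> 'a \<Rightarrow> 'b::linorder) \<Rightarrow> bool" where
  "ultra_similarity_on S d \<longleftrightarrow>
     (\<forall>i\<in>S. \<forall>j\<in>S. \<forall>k\<in>S. i \<noteq> j \<and> j \<noteq> k \<and> i \<noteq> k \<longrightarrow> min (d i j) (d j k) \<le> d i k)"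

lemma ultra_similarity_onD:
  assumes "ultra_similarity_on S d" "i \<in> S" "j \<in> S" "k \<in> S" "i \<noteq> j" "j \<noteq> k" "i \<noteq> k"
  shows "min (d i j) (d j k) \<le> d i k"
  using assms unfolding ultra_similarity_on_def by simp

definition symmetric_on :: "'a set \<Rightarrow> ('a \<Rightarrow> 'a \<Rightarrow> 'b) \<Rightarrow> bool" where
  "symmetric_on S d \<longleftrightarrow> (\<forall>i\<in>S. \<forall>j\<in>S. d i j = d j i)"

definition cluster :: "'a set \<Rightarrow> ('a \<Rightarrow> 'a \<Rightarrow> 'b::linorder) \<Rightarrow> 'a \<Rightarrow> 'b \<Rightarrow> 'a set" where
  "cluster S d x r = {y\<in>S. y = x \<or> r \<le> d x y}"

definition clusters_at :: "'a set \<Rightarrow> ('a \<Rightarrow> 'a \<Rightarrow> 'b::linorder) \<Rightarrow> 'b \<Rightarrow> 'a set set" where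
  "clusters_at S d r = {cluster S d x r | x. x \<in> S \<and> 2 \<le> card (cluster S d x r)}"

definition offdiag_values :: "'a set \<Rightarrow> ('a \<Rightarrow> 'a \<Rightarrow> 'b) \<Rightarrow> 'b set" where
  "offdiag_values S d = {d i j | i j. i \<in> S \<and> j \<in> S \<and> i \<noteq> j}"

definition cluster_tree ::
    "'a set \<Rightarrow> ('a \<Rightarrow> 'a \<Rightarrow> 'b::linordered_ab_group_add) \<Rightarrow> 'a set set \<Rightarrow> ('a set \<Rightarrow> 'b) \<Rightarrow> bool" where
  "cluster_tree S d R \<gamma> \<longleftrightarrow>
     S \<in> R \<and>
     (\<forall>T\<in>R. 2 \<le> card T \<and> (\<exists>x\<in>S. \<exists>r. T = cluster S d x r)) \<and>
     (\<forall>T\<in>R. T \<noteq> S \<longrightarrow> 0 < \<gamma> T) \<and>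
     (\<forall>i\<in>S. \<forall>j\<in>S. i \<noteq> j \<longrightarrow> d i j = (\<Sum>T\<in>{T\<in>R. i \<in> T \<and> j \<in> T}. \<gamma> T)) \<and>
     \<gamma> S = Min (offdiag_values S d)"

lemma card_ge_2_obtain_other:
  assumes "2 \<le> card A" "x \<in> A"
  obtains y where "y \<in> A" "y \<noteq> x"
proof -
  have "\<not> A \<subseteq> {x}"
    using card_mono[of "{x}" A] assms(1) by auto
  thus thesis using that by blast
qed

subsection \<open>Clusters of an ultra-similarity\<close>

lemma cluster_subset: "cluster S d x r \<subseteq> S"
  unfolding cluster_def by blast

lemma mem_cluster_imp_mem: "y \<in> cluster S d x r \<Longrightarrow> y \<in> S"
  unfolding cluster_def by simp

lemma center_in_cluster: "x \<in> S \<Longrightarrow> x \<in> cluster S d x r"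
  unfolding cluster_def by blast

lemma mem_cluster_iff: "j \<in> S \<Longrightarrow> i \<noteq> j \<Longrightarrow> j \<in> cluster S d i r \<longleftrightarrow> r \<le> d i j"
  unfolding cluster_def by auto

lemma cluster_antimono: "r \<le> r' \<Longrightarrow> cluster S d x r' \<subseteq> cluster S d x r"
  unfolding cluster_def by auto

lemma cluster_subset_cluster_of_member:
  assumes "ultra_similarity_on S d" "x \<in> S" "y \<in> cluster S d x r"
  shows "cluster S d y r \<subseteq> cluster S d x r"
proof
  fix z assume z: "z \<in> cluster S d y r"
  show "z \<in> cluster S d x r"
  proof (cases "z = x \<or> y = x \<or> z = y")
    case True
    thus ?thesis using assms(2,3) z unfolding cluster_def by blast
  next
    case False
    hence "y \<in> S" "z \<in> S" "r \<le> d x y" "r \<le> d y z"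
      using assms(3) z unfolding cluster_def by auto
    moreover have "min (d x y) (d y z) \<le> d x z"
      using ultra_similarity_onD[OF assms(1,2)] False calculation(1,2) by blast
    ultimately have "r \<le> d x z"
      by (metis min.boundedI order.trans)
    thus ?thesis using \<open>z \<in> S\<close> unfolding cluster_def by blast
  qed
qed

lemma symmetric_onD: "symmetric_on S d \<Longrightarrow> i \<in> S \<Longrightarrow> j \<in> S \<Longrightarrow> d i j = d j i"
  unfolding symmetric_on_def by simp

lemma cluster_recenter:
  assumes "ultra_similarity_on S d" "symmetric_on S d" "x \<in> S" "y \<in> cluster S d x r"
  shows "cluster S d y r = cluster S d x r"
proof
  show "cluster S d y r \<subseteq> cluster S d x r"
    by (rule cluster_subset_cluster_of_member[OF assms(1,3,4)])
  have "y \<in> S" using mem_cluster_imp_mem[OF assms(4)] .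
  have "x \<in> cluster S d y r"
  proof (cases "y = x")
    case True
    thus ?thesis using center_in_cluster[OF assms(3)] by simp
  next
    case False
    hence "r \<le> d x y" using assms(4) mem_cluster_iff[OF \<open>y \<in> S\<close> not_sym[OF False], of d r] by simp
    thus ?thesis
      using mem_cluster_iff[OF assms(3) False, of d r] symmetric_onD[OF assms(2,3) \<open>y \<in> S\<close>] by simp
  qed
  thus "cluster S d x r \<subseteq> cluster S d y r"
    by (rule cluster_subset_cluster_of_member[OF assms(1) \<open>y \<in> S\<close>])
qed

lemma cluster_nested:
  assumes "ultra_similarity_on S d" "symmetric_on S d" "x \<in> S" "y \<in> S"
  shows "cluster S d x r \<inter> cluster S d y r' = {} \<or>
    cluster S d x r \<subseteq> cluster S d y r' \<or> cluster S d y r' \<subseteq> cluster S d x r"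
proof (cases "cluster S d x r \<inter> cluster S d y r' = {}")
  case False
  then obtain z where z: "z \<in> cluster S d x r" "z \<in> cluster S d y r'" by blast
  have "cluster S d x r = cluster S d z r" "cluster S d y r' = cluster S d z r'"
    using cluster_recenter[OF assms(1,2)] assms(3,4) z by metis+
  thus ?thesis
    using cluster_antimono nle_le by metis
qed simp

lemma le_in_cluster:
  assumes "ultra_similarity_on S d" "symmetric_on S d" "x \<in> S"
    and "i \<in> cluster S d x r" "j \<in> cluster S d x r" "i \<noteq> j"
  shows "r \<le> d i j"
proof -
  have "j \<in> cluster S d i r"
    using cluster_recenter[OF assms(1-4)] assms(5) by simp
  thus ?thesis using assms(6) unfolding cluster_def by auto
qed

lemma mem_clusters_atE:
  assumes "T \<in> clusters_at S d r"
  obtains x where "x \<in> S" "T = cluster S d x r"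
  using assms unfolding clusters_at_def by blast

lemma clusters_at_containing:
  assumes "ultra_similarity_on S d" "symmetric_on S d" "finite S"
    and "i \<in> S" "j \<in> S" "i \<noteq> j"
  shows "{T \<in> clusters_at S d r. i \<in> T \<and> j \<in> T} = (if r \<le> d i j then {cluster S d i r} else {})"
proof (cases "r \<le> d i j")
  case True
  have ij: "i \<in> cluster S d i r" "j \<in> cluster S d i r"
    using True center_in_cluster[OF assms(4), of d r] mem_cluster_iff[OF assms(5,6), of d r] by simp_all
  have "card {i, j} \<le> card (cluster S d i r)"
    using card_mono[OF finite_subset[OF cluster_subset[of S d i r] assms(3)]] ij by simp
  hence "cluster S d i r \<in> clusters_at S d r"
    using assms(4,6) unfolding clusters_at_def by auto
  have "{T \<in> clusters_at S d r. i \<in> T \<and> j \<in> T} = {cluster S d i r}"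
  proof (rule set_eqI, rule iffI)
    fix T assume T: "T \<in> {T \<in> clusters_at S d r. i \<in> T \<and> j \<in> T}"
    then obtain x where "x \<in> S" "T = cluster S d x r"
      by (auto elim: mem_clusters_atE)
    thus "T \<in> {cluster S d i r}"
      using T cluster_recenter[OF assms(1,2) \<open>x \<in> S\<close>, of i r] by simp
  qed (use ij \<open>cluster S d i r \<in> clusters_at S d r\<close> in simp)
  thus ?thesis using True by simp
next
  case False
  have "\<not> (i \<in> T \<and> j \<in> T)" if T: "T \<in> clusters_at S d r" for T
  proof
    assume ij: "i \<in> T \<and> j \<in> T"
    obtain x where "x \<in> S" "T = cluster S d x r"
      using T by (rule mem_clusters_atE)
    hence "r \<le> d i j"
      using le_in_cluster[OF assms(1,2) \<open>x \<in> S\<close>, of i r j] ij assms(6) by simp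
    thus False using False by simp
  qed
  thus ?thesis using False by auto
qed

lemma ultra_similarity_on_min_trunc:
  "ultra_similarity_on S d \<Longrightarrow> ultra_similarity_on S (\<lambda>i j. min (d i j) v)"
  unfolding ultra_similarity_on_def by (metis min.mono min.idem min.assoc min.commute order_refl)

lemma symmetric_on_min_trunc:
  "symmetric_on S d \<Longrightarrow> symmetric_on S (\<lambda>i j. min (d i j) v)"
  unfolding symmetric_on_def by simp

lemma cluster_min_trunc:
  "r \<le> v \<Longrightarrow> cluster S (\<lambda>i j. min (d i j) v) x r = cluster S d x r"
  unfolding cluster_def by auto

lemma offdiag_values_min_trunc:
  fixes d :: "'a \<Rightarrow> 'a \<Rightarrow> 'b::linorder"
  assumes "v \<in> offdiag_values S d"
  shows "offdiag_values S (\<lambda>i j. min (d i j) v) = {t \<in> offdiag_values S d. t \<le> v}"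
proof
  show "offdiag_values S (\<lambda>i j. min (d i j) v) \<subseteq> {t \<in> offdiag_values S d. t \<le> v}"
  proof
    fix t assume "t \<in> offdiag_values S (\<lambda>i j. min (d i j) v)"
    then obtain i j where "i \<in> S" "j \<in> S" "i \<noteq> j" "t = min (d i j) v"
      unfolding offdiag_values_def by blast
    moreover have "min (d i j) v \<in> offdiag_values S d"
      using assms calculation unfolding offdiag_values_def min_def by auto
    ultimately show "t \<in> {t \<in> offdiag_values S d. t \<le> v}" by simp
  qed
  show "{t \<in> offdiag_values S d. t \<le> v} \<subseteq> offdiag_values S (\<lambda>i j. min (d i j) v)"
    unfolding offdiag_values_def by (force simp: min.absorb1)
qed

lemma offdiag_valuesI: "i \<in> S \<Longrightarrow> j \<in> S \<Longrightarrow> i \<noteq> j \<Longrightarrow> d i j \<in> offdiag_values S d"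
  unfolding offdiag_values_def by blast

lemma finite_offdiag_values: "finite S \<Longrightarrow> finite (offdiag_values S d)"
proof -
  assume "finite S"
  have "offdiag_values S d \<subseteq> (\<lambda>(i, j). d i j) ` (S \<times> S)"
    unfolding offdiag_values_def by auto
  thus ?thesis using \<open>finite S\<close> by (simp add: finite_subset)
qed

lemma offdiag_values_nonempty:
  assumes "2 \<le> card S"
  shows "offdiag_values S d \<noteq> {}"
proof -
  obtain x where "x \<in> S" using assms by fastforce
  moreover obtain y where "y \<in> S" "y \<noteq> x"
    using card_ge_2_obtain_other[OF assms \<open>x \<in> S\<close>] .
  ultimately show ?thesis unfolding offdiag_values_def by blast
qed

lemma Min_filter_le:
  fixes D :: "'a::linorder set"
  assumes "finite D" "v \<in> D"
  shows "Min {t \<in> D. t \<le> v} = Min D"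
proof (rule antisym)
  have "Min D \<in> D" using assms by (intro Min_in) auto
  moreover have "Min D \<le> v" using assms by simp
  ultimately show "Min {t \<in> D. t \<le> v} \<le> Min D"
    using assms by (intro Min_le) auto
  show "Min D \<le> Min {t \<in> D. t \<le> v}"
    using assms by (intro Min_antimono) auto
qed

subsection \<open>Cluster trees\<close>

lemma cluster_tree_root: "cluster_tree S d R \<gamma> \<Longrightarrow> S \<in> R"
  unfolding cluster_tree_def by simp

lemma cluster_tree_memD:
  "cluster_tree S d R \<gamma> \<Longrightarrow> T \<in> R \<Longrightarrow> 2 \<le> card T \<and> (\<exists>x\<in>S. \<exists>r. T = cluster S d x r)"
  unfolding cluster_tree_def by simp

lemma cluster_tree_weight_pos: "cluster_tree S d R \<gamma> \<Longrightarrow> T \<in> R \<Longrightarrow> T \<noteq> S \<Longrightarrow> 0 < \<gamma> T"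
  unfolding cluster_tree_def by simp

lemma cluster_tree_sum:
  "cluster_tree S d R \<gamma> \<Longrightarrow> i \<in> S \<Longrightarrow> j \<in> S \<Longrightarrow> i \<noteq> j \<Longrightarrow>
    d i j = (\<Sum>T\<in>{T\<in>R. i \<in> T \<and> j \<in> T}. \<gamma> T)"
  unfolding cluster_tree_def by simp

lemma cluster_tree_root_weight: "cluster_tree S d R \<gamma> \<Longrightarrow> \<gamma> S = Min (offdiag_values S d)"
  unfolding cluster_tree_def by simp

lemma cluster_tree_subset: "cluster_tree S d R \<gamma> \<Longrightarrow> T \<in> R \<Longrightarrow> T \<subseteq> S"
  using cluster_tree_memD cluster_subset by metis

lemma cluster_tree_finite:
  assumes "cluster_tree S d R \<gamma>" "finite S"
  shows "finite R"
proof (rule finite_subset)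
  show "R \<subseteq> Pow S" using cluster_tree_subset[OF assms(1)] by auto
qed (simp add: assms(2))

lemma cluster_tree_const:
  assumes "2 \<le> card S" "offdiag_values S d = {m}"
  shows "cluster_tree S d {S} (\<lambda>_. m)"
proof -
  obtain x where x: "x \<in> S" using assms(1) by fastforce
  have const: "d i j = m" if "i \<in> S" "j \<in> S" "i \<noteq> j" for i j
    using that assms(2) unfolding offdiag_values_def by blast
  hence "S = cluster S d x m"
    using x unfolding cluster_def by auto
  moreover have "{T. T = S \<and> i \<in> T \<and> j \<in> T} = {S}" if "i \<in> S" "j \<in> S" for i j
    using that by auto
  ultimately show ?thesis
    using assms x const unfolding cluster_tree_def by auto
qed

lemma cluster_min_trunc_nontrivial:
  assumes "x \<in> S" "2 \<le> card (cluster S (\<lambda>i j. min (d i j) v) x r)"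
  shows "cluster S (\<lambda>i j. min (d i j) v) x r = cluster S d x r"
proof -
  obtain y where "y \<in> cluster S (\<lambda>i j. min (d i j) v) x r" "y \<noteq> x"
    using card_ge_2_obtain_other[OF assms(2) center_in_cluster[OF assms(1)]] .
  hence "r \<le> min (d x y) v"
    unfolding cluster_def by simp
  thus ?thesis by (simp add: cluster_min_trunc)
qed

lemma root_notin_clusters_at:
  assumes "ultra_similarity_on S d" "symmetric_on S d"
    and "a \<in> S" "b \<in> S" "a \<noteq> b" "d a b < M"
  shows "S \<notin> clusters_at S d M"
proof
  assume "S \<in> clusters_at S d M"
  then obtain x where "x \<in> S" "S = cluster S d x M"
    by (rule mem_clusters_atE)
  thus False
    using le_in_cluster[OF assms(1,2), of x a M b] assms(3-6) by simp
qed

lemma sum_indicator_weights: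
  assumes "finite A" "finite B"
  shows "(\<Sum>T\<in>{T \<in> A \<union> B. P T}. (if T \<in> A then f T else 0) + (if T \<in> B then c else 0)) =
    (\<Sum>T\<in>{T \<in> A. P T}. f T) + (\<Sum>T\<in>{T \<in> B. P T}. c)"
proof -
  have "finite {T \<in> A \<union> B. P T}" using assms by simp
  moreover have "{T \<in> A \<union> B. P T} \<inter> A = {T \<in> A. P T}" "{T \<in> A \<union> B. P T} \<inter> B = {T \<in> B. P T}"
    by auto
  ultimately show ?thesis
    by (simp add: sum.distrib sum.inter_restrict[symmetric])
qed

text \<open>A cluster at the top level \<open>M\<close> may already occur in the tree of \<open>min d v\<close>, hence the
  weights are added rather than the trees merged.\<close>

lemma cluster_tree_extend:
  fixes d :: "'a \<Rightarrow> 'a \<Rightarrow> 'b::linordered_ab_group_add"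
  assumes ultra: "ultra_similarity_on S d" and sym: "symmetric_on S d" and "finite S"
    and below_M: "\<forall>i\<in>S. \<forall>j\<in>S. i \<noteq> j \<longrightarrow> d i j \<le> M"
    and gap: "\<forall>i\<in>S. \<forall>j\<in>S. i \<noteq> j \<longrightarrow> d i j < M \<longrightarrow> d i j \<le> v"
    and "v < M" and v: "v \<in> offdiag_values S d"
    and tree: "cluster_tree S (\<lambda>i j. min (d i j) v) R \<gamma>"
  shows "cluster_tree S d (R \<union> clusters_at S d M)
    (\<lambda>T. (if T \<in> R then \<gamma> T else 0) + (if T \<in> clusters_at S d M then M - v else 0))"
proof -
  let ?C = "clusters_at S d M"
  have "finite ?C"
    using \<open>finite S\<close> cluster_subset unfolding clusters_at_def
    by (auto intro: finite_subset[of _ "Pow S"])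
  have "S \<notin> ?C"
    using v root_notin_clusters_at[OF ultra sym] \<open>v < M\<close> unfolding offdiag_values_def by blast
  have old_clusters: "\<exists>x\<in>S. \<exists>r. T = cluster S d x r" if "T \<in> R" for T
    using cluster_tree_memD[OF tree that] cluster_min_trunc_nontrivial by metis
  have new_clusters: "2 \<le> card T \<and> (\<exists>x\<in>S. \<exists>r. T = cluster S d x r)" if "T \<in> ?C" for T
    using that unfolding clusters_at_def by blast
  have sum_eq: "d i j = (\<Sum>T\<in>{T\<in>R \<union> ?C. i \<in> T \<and> j \<in> T}.
      (if T \<in> R then \<gamma> T else 0) + (if T \<in> ?C then M - v else 0))"
    if ij: "i \<in> S" "j \<in> S" "i \<noteq> j" for i j
  proof -
    have "(\<Sum>T\<in>{T\<in>R \<union> ?C. i \<in> T \<and> j \<in> T}.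
        (if T \<in> R then \<gamma> T else 0) + (if T \<in> ?C then M - v else 0)) =
        (\<Sum>T\<in>{T\<in>R. i \<in> T \<and> j \<in> T}. \<gamma> T) + (\<Sum>T\<in>{T\<in>?C. i \<in> T \<and> j \<in> T}. M - v)"
      by (rule sum_indicator_weights[OF cluster_tree_finite[OF tree \<open>finite S\<close>] \<open>finite ?C\<close>])
    also have "(\<Sum>T\<in>{T\<in>R. i \<in> T \<and> j \<in> T}. \<gamma> T) = min (d i j) v"
      using cluster_tree_sum[OF tree ij] by simp
    also have "{T\<in>?C. i \<in> T \<and> j \<in> T} = (if M \<le> d i j then {cluster S d i M} else {})"
      by (rule clusters_at_containing[OF ultra sym \<open>finite S\<close> ij])
    finally have "(\<Sum>T\<in>{T\<in>R \<union> ?C. i \<in> T \<and> j \<in> T}.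
        (if T \<in> R then \<gamma> T else 0) + (if T \<in> ?C then M - v else 0)) =
        min (d i j) v + (if M \<le> d i j then M - v else 0)"
      by simp
    moreover have "d i j \<le> M" "d i j < M \<Longrightarrow> d i j \<le> v"
      using below_M gap ij by auto
    ultimately show ?thesis
      using \<open>v < M\<close> by (cases "M \<le> d i j") (auto simp: min_def)
  qed
  have "Min (offdiag_values S d) = \<gamma> S"
    using cluster_tree_root_weight[OF tree] Min_filter_le[OF finite_offdiag_values[OF \<open>finite S\<close>] v]
    by (simp add: offdiag_values_min_trunc[OF v])
  thus ?thesis
    unfolding cluster_tree_def
    using cluster_tree_root[OF tree] cluster_tree_memD[OF tree] old_clusters new_clusters
      cluster_tree_weight_pos[OF tree] sum_eq \<open>S \<notin> ?C\<close> \<open>v < M\<close>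
    by (auto simp: add_pos_pos)
qed

lemma cluster_tree_exists:
  fixes d :: "'a \<Rightarrow> 'a \<Rightarrow> 'b::linordered_ab_group_add"
  assumes "finite S" "2 \<le> card S" "ultra_similarity_on S d" "symmetric_on S d"
  shows "\<exists>R \<gamma>. cluster_tree S d R \<gamma>"
  using assms(3,4)
proof (induction "card (offdiag_values S d)" arbitrary: d rule: less_induct)
  case less
  let ?D = "offdiag_values S d"
  have fin: "finite ?D" and ne: "?D \<noteq> {}"
    using finite_offdiag_values[OF assms(1)] offdiag_values_nonempty[OF assms(2)] .
  show ?case
  proof (cases "card ?D = 1")
    case True
    then obtain m where "?D = {m}" by (rule card_1_singletonE)
    thus ?thesis using cluster_tree_const[OF assms(2)] by blast
  next
    case False
    define M where "M = Max ?D"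
    have "M \<in> ?D" using fin ne unfolding M_def by simp
    have "?D - {M} \<noteq> {}"
    proof
      assume "?D - {M} = {}"
      hence "?D = {M}" using \<open>M \<in> ?D\<close> by blast
      thus False using False by simp
    qed
    define v where "v = Max (?D - {M})"
    have v: "v \<in> ?D" "v \<noteq> M"
      using Max_in[OF _ \<open>?D - {M} \<noteq> {}\<close>] fin unfolding v_def by auto
    hence "v < M" using fin unfolding M_def by (simp add: order.not_eq_order_implies_strict)
    have le_v: "t \<le> v" if "t \<in> ?D" "t \<noteq> M" for t
      using that fin unfolding v_def by simp
    have "offdiag_values S (\<lambda>i j. min (d i j) v) = ?D - {M}"
      using offdiag_values_min_trunc[OF v(1)] le_v \<open>v < M\<close> by auto
    moreover have "card (?D - {M}) < card ?D"
      using fin \<open>M \<in> ?D\<close> by (rule card_Diff1_less)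
    ultimately obtain R \<gamma> where tree: "cluster_tree S (\<lambda>i j. min (d i j) v) R \<gamma>"
      using less.hyps ultra_similarity_on_min_trunc[OF less.prems(1)]
        symmetric_on_min_trunc[OF less.prems(2)] by metis
    have "\<forall>i\<in>S. \<forall>j\<in>S. i \<noteq> j \<longrightarrow> d i j \<le> M"
      using fin unfolding M_def by (auto intro!: Max_ge offdiag_valuesI)
    moreover have "\<forall>i\<in>S. \<forall>j\<in>S. i \<noteq> j \<longrightarrow> d i j < M \<longrightarrow> d i j \<le> v"
      using le_v by (auto intro!: offdiag_valuesI)
    ultimately show ?thesis
      using cluster_tree_extend[OF less.prems assms(1) _ _ \<open>v < M\<close> v(1) tree] by blast
  qed
qed

lemma cluster_tree_is_tree:
  assumes ultra: "ultra_similarity_on {1..n} d" and sym: "symmetric_on {1..n} d"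
    and tree: "cluster_tree {1..n} d R \<gamma>"
  shows "is_tree n R \<gamma>"
  unfolding is_tree_def species_of_tree_def
proof (intro conjI ballI impI)
  fix T U assume "T \<in> R" "U \<in> R"
  then obtain x r y r' where "x \<in> {1..n}" "T = cluster {1..n} d x r"
    and "y \<in> {1..n}" "U = cluster {1..n} d y r'"
    using cluster_tree_memD[OF tree] by metis
  thus "T \<inter> U = {} \<or> T \<subseteq> U \<or> U \<subseteq> T"
    using cluster_nested[OF ultra sym] by simp
qed (use cluster_tree_root[OF tree] cluster_tree_memD[OF tree] cluster_tree_subset[OF tree]
      cluster_tree_weight_pos[OF tree] in auto)

lemma exceptional_imp_ultra_similarity:
  assumes "symmetric_mat n A" "exceptional n A"
  shows "ultra_similarity_on {1..n} (\<lambda>i j. - A i j)"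
  unfolding ultra_similarity_on_def
proof (intro ballI impI)
  fix i j k assume ijk: "i \<in> {1..n}" "j \<in> {1..n}" "k \<in> {1..n}" "i \<noteq> j \<and> j \<noteq> k \<and> i \<noteq> k"
  have "max_twice (A i j) (A j k) (A k i)"
    using assms(2) ijk unfolding exceptional_def by blast
  hence "A k i \<le> max (A i j) (A j k)"
    unfolding max_twice_def Let_def by (auto simp: max_def split: if_splits)
  moreover have "A k i = A i k"
    using assms(1) ijk unfolding symmetric_mat_def by blast
  ultimately show "min (- A i j) (- A j k) \<le> - A i k"
    by (auto simp: min_def max_def split: if_splits)
qed

lemma AT_offdiag: "i \<noteq> j \<Longrightarrow> AT T i j = (if i \<in> T \<and> j \<in> T then -1 else 0)"
  unfolding AT_def by simp

lemma AT_row_sum: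
  assumes "T \<subseteq> {1..n}" "i \<in> {1..n}"
  shows "(\<Sum>j\<in>{1..n}. AT T i j) = 0"
proof (cases "i \<in> T")
  case False
  thus ?thesis unfolding AT_def by simp
next
  case True
  have "finite T" using assms(1) finite_subset by blast
  have "(\<Sum>j\<in>{1..n}. AT T i j) = AT T i i + (\<Sum>j\<in>{1..n} - {i}. AT T i j)"
    using assms(2) by (simp add: sum.remove)
  also have "(\<Sum>j\<in>{1..n} - {i}. AT T i j) = (\<Sum>j\<in>{1..n} - {i}. if j \<in> T then -1 else 0)"
    using True by (intro sum.cong) (auto simp: AT_offdiag)
  also have "\<dots> = - of_nat (card (({1..n} - {i}) \<inter> T))"
    by (simp add: sum.If_cases)
  also have "({1..n} - {i}) \<inter> T = T - {i}"
    using assms(1) by auto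
  also have "AT T i i = of_nat (card T) - 1"
    using True unfolding AT_def by simp
  finally have "(\<Sum>j\<in>{1..n}. AT T i j) = of_nat (card T) - 1 - of_nat (card (T - {i}))"
    by simp
  moreover have "1 \<le> card T"
    using True \<open>finite T\<close> by (simp add: Suc_le_eq card_gt_0_iff) blast
  ultimately show ?thesis
    using True \<open>finite T\<close> by (simp add: of_nat_diff)
qed

lemma tree_expansion:
  assumes "finite R" "\<forall>T\<in>R. T \<subseteq> {1..n}"
    and rows: "\<forall>i\<in>{1..n}. (\<Sum>j\<in>{1..n}. A i j) = s"
    and offdiag: "\<forall>i\<in>{1..n}. \<forall>j\<in>{1..n}. i \<noteq> j \<longrightarrow> - A i j = (\<Sum>T\<in>{T\<in>R. i \<in> T \<and> j \<in> T}. \<gamma> T)"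
  defines "B \<equiv> \<lambda>i j. (if i = j then s else 0) + (\<Sum>T\<in>R. \<gamma> T * AT T i j)"
  shows "\<forall>i\<in>{1..n}. \<forall>j\<in>{1..n}. A i j = B i j"
proof -
  have B_offdiag: "A i j = B i j" if "i \<in> {1..n}" "j \<in> {1..n}" "i \<noteq> j" for i j
  proof -
    have "(\<Sum>T\<in>R. \<gamma> T * AT T i j) = (\<Sum>T\<in>R. if i \<in> T \<and> j \<in> T then - \<gamma> T else 0)"
      using \<open>i \<noteq> j\<close> by (intro sum.cong) (simp_all add: AT_offdiag)
    also have "\<dots> = (\<Sum>T\<in>{T\<in>R. i \<in> T \<and> j \<in> T}. - \<gamma> T)"
      using \<open>finite R\<close> by (simp add: sum.inter_filter)
    also have "\<dots> = A i j"
      using offdiag[rule_format, OF that] by (simp add: sum_negf)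
    finally show ?thesis
      unfolding B_def using that by simp
  qed
  have B_rows: "(\<Sum>j\<in>{1..n}. B i j) = s" if "i \<in> {1..n}" for i
  proof -
    have "(\<Sum>j\<in>{1..n}. \<Sum>T\<in>R. \<gamma> T * AT T i j) = (\<Sum>T\<in>R. \<gamma> T * (\<Sum>j\<in>{1..n}. AT T i j))"
      by (subst sum.swap) (simp add: sum_distrib_left)
    also have "\<dots> = 0"
      using AT_row_sum assms(2) that by simp
    finally show ?thesis
      using that unfolding B_def by (simp add: sum.distrib)
  qed
  show ?thesis
  proof (intro ballI)
    fix i j assume ij: "i \<in> {1..n}" "j \<in> {1..n}"
    show "A i j = B i j"
    proof (cases "i = j")
      case True
      have row_split: "(\<Sum>k\<in>{1..n}. f k) = f i + (\<Sum>k\<in>{1..n} - {i}. f k)" for f :: "nat \<Rightarrow> rat"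
        using ij(1) by (simp add: sum.remove)
      have "A i i + (\<Sum>k\<in>{1..n} - {i}. A i k) = s"
        using rows ij(1) row_split[of "A i"] by simp
      moreover have "B i i + (\<Sum>k\<in>{1..n} - {i}. B i k) = s"
        using B_rows[OF ij(1)] row_split[of "B i"] by simp
      moreover have "(\<Sum>k\<in>{1..n} - {i}. A i k) = (\<Sum>k\<in>{1..n} - {i}. B i k)"
        using B_offdiag ij by (intro sum.cong) auto
      ultimately show ?thesis
        using True by simp
    qed (use B_offdiag ij in blast)
  qed
qed

theorem mainTheorem6:
  fixes n :: nat and A :: "nat \<Rightarrow> nat \<Rightarrow> rat" and s :: rat
  assumes "n \<ge> 2"
    and "symmetric_mat n A"
    and "exceptional n A"
    and "magic n A s"
  shows "\<exists>R \<gamma>. is_tree n R \<gamma> \<and>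
           (\<forall>i\<in>{1..n}. \<forall>j\<in>{1..n}.
              A i j = (if i = j then s else 0) + (\<Sum>T\<in>R. \<gamma> T * AT T i j)) \<and>
           \<gamma> {1..n} = Min {- A i j | i j. i \<in> {1..n} \<and> j \<in> {1..n} \<and> i \<noteq> j}"
proof -
  let ?d = "\<lambda>i j. - A i j"
  have ultra: "ultra_similarity_on {1..n} ?d"
    using exceptional_imp_ultra_similarity[OF assms(2,3)] .
  have sym: "symmetric_on {1..n} ?d"
    using assms(2) unfolding symmetric_mat_def symmetric_on_def by simp
  obtain R \<gamma> where tree: "cluster_tree {1..n} ?d R \<gamma>"
    using cluster_tree_exists[OF _ _ ultra sym] assms(1) by auto
  have "\<forall>i\<in>{1..n}. \<forall>j\<in>{1..n}. A i j = (if i = j then s else 0) + (\<Sum>T\<in>R. \<gamma> T * AT T i j)"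
  proof (rule tree_expansion)
    show "finite R" using cluster_tree_finite[OF tree] by simp
    show "\<forall>T\<in>R. T \<subseteq> {1..n}" using cluster_tree_subset[OF tree] by blast
    show "\<forall>i\<in>{1..n}. (\<Sum>j\<in>{1..n}. A i j) = s" using assms(4) unfolding magic_def by blast
    show "\<forall>i\<in>{1..n}. \<forall>j\<in>{1..n}. i \<noteq> j \<longrightarrow> - A i j = (\<Sum>T\<in>{T\<in>R. i \<in> T \<and> j \<in> T}. \<gamma> T)"
      using cluster_tree_sum[OF tree] by blast
  qed
  moreover have "\<gamma> {1..n} = Min {- A i j | i j. i \<in> {1..n} \<and> j \<in> {1..n} \<and> i \<noteq> j}"
    using cluster_tree_root_weight[OF tree] unfolding offdiag_values_def by simp
  ultimately show ?thesis
    using cluster_tree_is_tree[OF ultra sym tree] by blast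
qed

end
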